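(* Let $G$ be a circle of circumference $1$ and $n\ge1$. The mechanism $M$ (LRM when the agents lie on one semicircle, RC otherwise) is strategyproof, and for every $\mathbf{x}\in G^n$, $\mathrm{mc}(M(\mathbf{x}),\mathbf{x})\le\frac32\min_{y\in G}\mathrm{mc}(y,\mathbf{x})$.
   Context: $G$ is a circle of circumference $1$; $d(x,y)$ is the length of the shorter arc between $x,y$; $\hat{x}$ denotes the antipodal point of $x$. Agents $N=\{1,\dots,n\}$ have locations $\mathbf{x}\in G^n$. For a distribution $P$ on $G$: $\mathrm{cost}(P,x_i)=\mathbb{E}_{y\sim P}[d(x_i,y)]$ and $\mathrm{mc}(P,\mathbf{x})=\mathbb{E}_{y\sim P}[\max_{i}d(y,x_i)]$. A mechanism $f:G^n\to\Delta(G)$ is strategyproof if $\mathrm{cost}(f(x_i',\mathbf{x}_{-i}),x_i)\ge\mathrm{cost}(f(\mathbf{x}),x_i)$ for all $\mathbf{x},i,x_i'$. The agents are on one semicircle if all $x_i$ lie in some closed arc of length $1/2$. LRM mechanism (used when agents are on one semicircle): fix a closed arc of minimal length containing all $x_i$ (its length is at most $1/2$; its endpoints $l,r$ are agent locations); return $l$ with probability $1/4$, $r$ with probability $1/4$, and the midpoint $\mathrm{cen}(l,r)$ of that arc with probability $1/2$. RC (Random Center) mechanism (used when agents are not on one semicircle): the antipodal points $\hat{x}_1,\dots,\hat{x}_n$ partition $G$ into arcs between cyclically consecutive antipodal points; choose a point $y$ uniformly at random on $G$ and return the midpoint of the arc of this partition containing $y$ (equivalently, return the midpoint of each such arc with probability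 equal to its length). $M(\mathbf{x})=\mathrm{lrm}(\mathbf{x})$ if agents are on one semicircle and $M(\mathbf{x})=\mathrm{rc}(\mathbf{x})$ otherwise. *)

theory Defs
  imports "HOL-Probability.Probability"
begin

text \<open>The circle G of circumference 1 is represented by the interval [0,1) of reals,
  points being identified modulo 1.  A profile of n agents is a function
  x :: nat \<Rightarrow> real with x i \<in> [0,1) for i < n (agents are 0,...,n-1).
  Distributions on G are probability mass functions on real supported in [0,1).\<close>

definition cdist :: "real \<Rightarrow> real \<Rightarrow> real" where
  "cdist x y = min (frac (x - y)) (frac (y - x))"

definition antipode :: "real \<Rightarrow> real" where
  "antipode x = frac (x + 1/2)"

definition profile :: "nat \<Rightarrow> (nat \<Rightarrow> real) \<Rightarrow> bool" where
  "profile n x \<longleftrightarrow> (\<forall>i<n. x i \<in> {0..<1})"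

definition cost :: "real pmf \<Rightarrow> real \<Rightarrow> real" where
  "cost P xi = measure_pmf.expectation P (\<lambda>y. cdist xi y)"

definition mc :: "nat \<Rightarrow> real pmf \<Rightarrow> (nat \<Rightarrow> real) \<Rightarrow> real" where
  "mc n P x = measure_pmf.expectation P (\<lambda>y. Max ((\<lambda>i. cdist y (x i)) ` {..<n}))"

text \<open>The closed arc starting at l (going in the positive direction) of length L contains p.\<close>
definition in_arc :: "real \<Rightarrow> real \<Rightarrow> real \<Rightarrow> bool" where
  "in_arc l L p \<longleftrightarrow> frac (p - l) \<le> L"

definition covers :: "nat \<Rightarrow> (nat \<Rightarrow> real) \<Rightarrow> real \<Rightarrow> real \<Rightarrow> bool" where
  "covers n x l L \<longleftrightarrow> (\<forall>i<n. in_arc l L (x i))"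

definition one_semicircle :: "nat \<Rightarrow> (nat \<Rightarrow> real) \<Rightarrow> bool" where
  "one_semicircle n x \<longleftrightarrow> (\<exists>l. covers n x l (1/2))"

definition lrm_arc :: "nat \<Rightarrow> (nat \<Rightarrow> real) \<Rightarrow> real \<times> real" where
  "lrm_arc n x = (SOME (l, L). 0 \<le> L \<and> covers n x l L
      \<and> (\<forall>l' L'. covers n x l' L' \<longrightarrow> L \<le> L')
      \<and> (\<exists>i<n. x i = l) \<and> (\<exists>j<n. x j = frac (l + L)))"

definition lrm :: "nat \<Rightarrow> (nat \<Rightarrow> real) \<Rightarrow> real pmf" where
  "lrm n x = (case lrm_arc n x of (l, L) \<Rightarrow>
      pmf_of_list [(l, 1/4), (frac (l + L), 1/4), (frac (l + L/2), 1/2)])"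

text \<open>Random Center: the set A of antipodal points; for a \<in> A, gap a is the length of
  the arc from a to the next antipodal point in the positive direction (1 if A = {a}).
  The midpoint of that arc is returned with probability equal to its length.\<close>
definition antipodes :: "nat \<Rightarrow> (nat \<Rightarrow> real) \<Rightarrow> real set" where
  "antipodes n x = (\<lambda>i. antipode (x i)) ` {..<n}"

definition gap :: "real set \<Rightarrow> real \<Rightarrow> real" where
  "gap A a = Min (insert 1 ((\<lambda>b. frac (b - a)) ` (A - {a})))"

definition rc :: "nat \<Rightarrow> (nat \<Rightarrow> real) \<Rightarrow> real pmf" where
  "rc n x = embed_pmf (\<lambda>q. \<Sum>a\<in>antipodes n x.
      if frac (a + gap (antipodes n x) a / 2) = q then gap (antipodes n x) a else 0)"

definition M :: "nat \<Rightarrow> (nat \<Rightarrow> real) \<Rightarrow> real pmf" where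
  "M n x = (if one_semicircle n x then lrm n x else rc n x)"

definition strategyproof :: "nat \<Rightarrow> ((nat \<Rightarrow> real) \<Rightarrow> real pmf) \<Rightarrow> bool" where
  "strategyproof n f \<longleftrightarrow> (\<forall>x i xi'. profile n x \<longrightarrow> i < n \<longrightarrow> xi' \<in> {0..<1} \<longrightarrow>
      cost (f (x(i := xi'))) (x i) \<ge> cost (f x) (x i))"

end

theory Submission
  imports Defs
begin

(* Antipodes reflect distances:
   d(y, antipode z) = 1/2 - d(y, z).  With the minimal covering arc [l, l + L] (L <= 1/2), the expected cost of a point at
   offset w = frac (z - l) is the explicit piecewise-linear function lrm_cost L w.  Elementary
   inequalities about it show: an agent pays half its distance to an arc endpoint (an agent);
   every point pays at least half its distance to every agent; a point whose antipode lies in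
   the arc pays at least 1/4.
   RC.  The antipodal points cut the circle into gaps of total length 1 (the cyclic successor
   is a permutation).  Comparing g * d(y, midpoint) with the integral of d(y, .) over each gap,
   the integrals telescope to 1/4, up to one wrap-around defect; this yields
   cost >= 1/4 - d(y, b)^2 for every antipodal point b, and cost <= 1/4 - d(y, b)^2 for some b
   when the antipode of y is itself an antipodal point.
   Strategyproofness follows by a case analysis on whether the true and the misreported profile
   lie on a semicircle.  For the approximation ratio, LRM has maximum cost <= 3L/4 against an
   optimum >= L/2, and RC has maximum cost <= 1/2 - G^2/2 against an optimum >= 1/2 - G/2,
   G being the largest gap. *)

definition arcd :: "real \<Rightarrow> real" where
  "arcd t = min (frac t) (1 - frac t)"

lemma cdist_arcd: "cdist x y = arcd (x - y)"
proof -
  have e: "frac (y - x) = (if x - y \<in> \<int> then 0 else 1 - frac (x - y))"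
    using frac_neg[of "x - y"] by simp
  show ?thesis
  proof (cases "x - y \<in> \<int>")
    case True
    then have "frac (x - y) = 0" "frac (y - x) = 0" using e by simp_all
    then show ?thesis unfolding cdist_def arcd_def by (simp only:)
  qed (use e in \<open>simp add: cdist_def arcd_def\<close>)
qed

lemma arcd_frac_cong: "frac t = frac s \<Longrightarrow> arcd t = arcd s"
  by (simp add: arcd_def)

lemma arcd_frac: "arcd (frac t) = arcd t"
  by (simp add: arcd_def)

lemma arcd_nonneg: "0 \<le> arcd t"
  using frac_lt_1[of t] by (simp add: arcd_def)

lemma arcd_le_half: "arcd t \<le> 1/2"
  by (simp add: arcd_def min_def)

lemma arcd_neg: "arcd (- t) = arcd t"
  using cdist_arcd[of 0 t] cdist_arcd[of t 0] by (simp add: cdist_def min.commute)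

(* On [-1, 1], arcd is the usual tent function; all later computations reduce to this. *)
lemma arcd_tent:
  assumes "-1 \<le> t" "t \<le> 1"
  shows "arcd t = min \<bar>t\<bar> (1 - \<bar>t\<bar>)"
proof (cases "t = 1 \<or> t = -1")
  case True
  then have "frac t = 0" "\<bar>t\<bar> = 1" by auto
  then show ?thesis unfolding arcd_def by (simp only:)
next
  case False
  show ?thesis
  proof (cases "t \<ge> 0")
    case True
    then have "frac t = t" using False assms by (simp add: frac_eq)
    then show ?thesis using True by (simp add: arcd_def)
  next
    case neg: False
    have "frac (t + 1) = t + 1" using False assms neg by (simp add: frac_eq)
    then have "frac t = t + 1" by (simp add: frac_1_eq)
    then show ?thesis using neg by (simp add: arcd_def min_def)
  qed
qed

lemma arcd_rising: "0 \<le> t \<Longrightarrow> t \<le> 1/2 \<Longrightarrow> arcd t = t"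
  by (subst arcd_tent) (auto simp: min_def)

lemma arcd_falling: "1/2 \<le> t \<Longrightarrow> t \<le> 1 \<Longrightarrow> arcd t = 1 - t"
  by (subst arcd_tent) (auto simp: min_def)

lemma arcd_rising_again: "1 \<le> t \<Longrightarrow> t \<le> 3/2 \<Longrightarrow> arcd t = t - 1"
  using arcd_frac_cong[of t "t - 1"] arcd_rising[of "t - 1"] frac_1_eq[of "t - 1"] by simp

lemma arcd_antipode: "arcd (t - 1/2) = 1/2 - arcd t"
proof -
  have f: "0 \<le> frac t" "frac t < 1" using frac_lt_1[of t] by auto
  have "arcd (t - 1/2) = arcd (frac t - 1/2)"
    by (rule arcd_frac_cong) (metis diff_conv_add_uminus frac_add_simps(1))
  also have "\<dots> = min \<bar>frac t - 1/2\<bar> (1 - \<bar>frac t - 1/2\<bar>)"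
    using f by (intro arcd_tent) linarith+
  also have "\<dots> = \<bar>frac t - 1/2\<bar>"
    using f by (simp add: min_def abs_if)
  finally show ?thesis using f by (simp add: arcd_def min_def abs_if)
qed

lemma cdist_frac_right: "cdist x (frac y) = cdist x y"
  by (simp add: cdist_arcd arcd_def frac_diff_simp)

lemma cdist_frac_left: "cdist (frac x) y = cdist x y"
  by (metis cdist_def cdist_frac_right min.commute)

lemma cdist_sym: "cdist x y = cdist y x"
  by (simp add: cdist_def min.commute)

lemma cdist_self: "cdist x x = 0"
  by (simp add: cdist_def)

lemma cdist_nonneg: "0 \<le> cdist x y"
  by (simp add: cdist_arcd arcd_nonneg)

lemma cdist_le_half: "cdist x y \<le> 1/2"
  unfolding cdist_arcd by (rule arcd_le_half)

lemma cdist_antipode: "cdist y (antipode z) = 1/2 - cdist y z"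
  unfolding antipode_def cdist_frac_right unfolding cdist_arcd
  using arcd_antipode[of "y - z"] by (simp add: algebra_simps)

lemma cdist_from_base: "cdist z l = arcd (frac (z - l))"
  unfolding cdist_arcd by (simp add: arcd_frac)

lemma cdist_to_base: "cdist y b = arcd (frac (b - y))"
  using arcd_neg[of "b - y"] unfolding cdist_arcd arcd_frac by simp

lemma cdist_offset: "cdist z (frac (l + c)) = arcd (frac (z - l) - c)"
proof -
  have "frac (frac (z - l) - c) = frac (z - l - c)"
    using frac_add_simps(1)[of "z - l" "- c"] by simp
  then show ?thesis unfolding cdist_frac_right cdist_arcd
    by (intro arcd_frac_cong) (simp add: algebra_simps frac_diff_simp)
qed

lemma cdist_relative: "cdist z p = arcd (frac (z - l) - frac (p - l))"
proof -
  have "frac (frac (z - l) - frac (p - l)) = frac (z - p)"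
    using frac_diff[of "z - l" "p - l"] by simp
  then show ?thesis unfolding cdist_arcd by (intro arcd_frac_cong) simp
qed

lemma frac_wrap: "1 \<le> t \<Longrightarrow> t < 2 \<Longrightarrow> frac t = t - 1"
  by (subst frac_unique_iff) auto

lemma frac_unit: "0 \<le> t \<Longrightarrow> t < 1 \<Longrightarrow> frac t = t"
  by (simp add: frac_eq)

lemma frac_add_frac: "frac (frac p + frac q) = frac (p + q)"
  by (simp add: frac_add_simps)

lemma frac_diff_unit:
  assumes "a \<in> {0..<1}" "b \<in> {0..<1}"
  shows "frac (b - a) = (if a \<le> b then b - a else b - a + 1)"
  using frac_diff_pos[of a b] frac_diff_neg[of b a] assms by auto

lemma frac_diff_unit_pos:
  assumes "a \<in> {0..<1}" "b \<in> {0..<1}" "a \<noteq> b"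
  shows "0 < frac (b - a)"
  using frac_diff_unit[OF assms(1,2)] assms by (auto split: if_splits)

lemma frac_minus_frac: "frac (frac p - q) = frac (p - q)"
  using frac_add_simps(1)[of p "-q"] by simp

lemma frac_antipode_offset: "frac (antipode z - l) = frac (frac (z - l) + 1/2)"
proof -
  have "frac (antipode z - l) = frac (z + 1/2 - l)"
    unfolding antipode_def by (rule frac_minus_frac)
  then show ?thesis by (simp add: algebra_simps)
qed

lemma expectation_pmf_of_list:
  assumes "pmf_of_list_wf xs"
  shows "measure_pmf.expectation (pmf_of_list xs) (f :: _ \<Rightarrow> real) = (\<Sum>(x,p)\<leftarrow>xs. p * f x)"
proof -
  let ?A = "set (map fst xs)"
  have "measure_pmf.expectation (pmf_of_list xs) f = (\<Sum>a\<in>?A. f a * pmf (pmf_of_list xs) a)"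
    using set_pmf_of_list[OF assms] by (intro integral_measure_pmf_real) auto
  also have "\<dots> = (\<Sum>a\<in>?A. \<Sum>k = 0..<length xs. if fst (xs ! k) = a then f a * snd (xs ! k) else 0)"
    by (intro sum.cong refl, subst pmf_pmf_of_list[OF assms], subst sum_list_map_filter',
        subst sum_list_sum_nth) (simp add: sum_distrib_left if_distrib cong: if_cong)
  also have "\<dots> = (\<Sum>k = 0..<length xs. \<Sum>a\<in>?A. if fst (xs ! k) = a then f a * snd (xs ! k) else 0)"
    by (rule sum.swap)
  also have "\<dots> = (\<Sum>(x,p)\<leftarrow>xs. p * f x)"
    by (simp add: sum.delta sum_list_sum_nth case_prod_unfold mult.commute)
  finally show ?thesis .
qed

lemma cost_nonneg: "0 \<le> cost P z"
  unfolding cost_def by (rule integral_nonneg_AE) (simp add: cdist_nonneg)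

lemma profile_update: "profile n x \<Longrightarrow> v \<in> {0..<1} \<Longrightarrow> profile n (x(i := v))"
  unfolding profile_def by auto


(* The minimal covering arc: start at an agent i0 minimising the largest forward offset W i0
   to the other agents; every covering arc [l', l' + L'] has L' >= W i1 >= W i0, where i1 is
   the first agent after l'. *)
lemma minimal_arc_exists:
  assumes n: "n \<ge> 1" and p: "profile n x"
  shows "\<exists>l L. 0 \<le> L \<and> covers n x l L \<and> (\<forall>l' L'. covers n x l' L' \<longrightarrow> L \<le> L')
      \<and> (\<exists>i<n. x i = l) \<and> (\<exists>j<n. x j = frac (l + L))"
proof -
  define W where "W i = Max ((\<lambda>j. frac (x j - x i)) ` {..<n})" for i
  have ne: "{..<n} \<noteq> {}" using n by (auto simp: lessThan_empty_iff)
  have "Min (W ` {..<n}) \<in> W ` {..<n}" using ne by (intro Min_in) auto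
  then obtain i0 where i0: "i0 < n" "W i0 = Min (W ` {..<n})" by auto
  have "W i0 \<in> (\<lambda>j. frac (x j - x i0)) ` {..<n}" unfolding W_def using ne by (intro Max_in) auto
  then obtain j0 where j0: "j0 < n" "W i0 = frac (x j0 - x i0)" by auto
  have cov: "covers n x (x i0) (W i0)"
    unfolding covers_def in_arc_def W_def by (auto intro!: Max_ge)
  have minimal: "W i0 \<le> L'" if c: "covers n x l' L'" for l' L'
  proof -
    have "Min ((\<lambda>i. frac (x i - l')) ` {..<n}) \<in> (\<lambda>i. frac (x i - l')) ` {..<n}"
      using ne by (intro Min_in) auto
    then obtain i1 where i1: "i1 < n" "frac (x i1 - l') = Min ((\<lambda>i. frac (x i - l')) ` {..<n})"
      by auto
    have "frac (x j - x i1) \<le> L'" if j: "j < n" for j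
    proof -
      have le: "frac (x i1 - l') \<le> frac (x j - l')" using i1 j by simp
      have "frac (x j - x i1) = frac ((x j - l') - (x i1 - l'))" by simp
      also have "\<dots> = frac (x j - l') - frac (x i1 - l')" using le by (rule frac_diff_pos)
      also have "\<dots> \<le> L'"
      proof -
        have "frac (x j - l') \<le> L'" using c j unfolding covers_def in_arc_def by blast
        then show ?thesis using frac_ge_0[of "x i1 - l'"] by linarith
      qed
      finally show ?thesis .
    qed
    then have "W i1 \<le> L'" unfolding W_def using ne by (intro Max.boundedI) auto
    moreover have "W i0 \<le> W i1" using i0(2) i1(1) by simp
    ultimately show ?thesis by linarith
  qed
  have "frac (x i0 + W i0) = x j0"
    using j0 p unfolding profile_def by (simp add: frac_add_simps)
  moreover have "0 \<le> W i0" using j0(2) by simp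
  ultimately show ?thesis using cov minimal i0(1) j0(1)
    by (intro exI[of _ "x i0"] exI[of _ "W i0"]) auto
qed

lemma lrm_arc:
  assumes "n \<ge> 1" and "profile n x" and e: "lrm_arc n x = (l, L)"
  shows "0 \<le> L" "covers n x l L" "\<And>l' L'. covers n x l' L' \<Longrightarrow> L \<le> L'"
    "\<exists>i<n. x i = l" "\<exists>j<n. x j = frac (l + L)"
proof -
  let ?P = "\<lambda>p. case p of (l, L) \<Rightarrow> 0 \<le> L \<and> covers n x l L
      \<and> (\<forall>l' L'. covers n x l' L' \<longrightarrow> L \<le> L')
      \<and> (\<exists>i<n. x i = l) \<and> (\<exists>j<n. x j = frac (l + L))"
  have ex: "\<exists>p. ?P p" using minimal_arc_exists[OF assms(1,2)] by auto
  have "lrm_arc n x = (SOME p. ?P p)" unfolding lrm_arc_def by simp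
  then have "?P (lrm_arc n x)" using someI_ex[OF ex] by simp
  then show "0 \<le> L" "covers n x l L" "\<And>l' L'. covers n x l' L' \<Longrightarrow> L \<le> L'"
    "\<exists>i<n. x i = l" "\<exists>j<n. x j = frac (l + L)"
    using e by auto
qed

lemma lrm_arc_le_half:
  assumes "n \<ge> 1" "profile n x" "one_semicircle n x" "lrm_arc n x = (l, L)"
  shows "L \<le> 1/2"
proof -
  obtain l0 where "covers n x l0 (1/2)" using assms(3) unfolding one_semicircle_def by blast
  then show ?thesis by (rule lrm_arc(3)[OF assms(1,2,4)])
qed

lemma lrm_arc_offset:
  assumes "n \<ge> 1" "profile n x" "lrm_arc n x = (l, L)" "i < n"
  shows "frac (x i - l) \<le> L"
  using lrm_arc(2)[OF assms(1-3)] assms(4) unfolding covers_def in_arc_def by blast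

lemma expectation_lrm:
  assumes "lrm_arc n x = (l, L)"
  shows "measure_pmf.expectation (lrm n x) (f :: real \<Rightarrow> real)
           = f l / 4 + f (frac (l + L)) / 4 + f (frac (l + L/2)) / 2"
proof -
  have "pmf_of_list_wf [(l, 1/4), (frac (l + L), 1/4), (frac (l + L/2), 1/2::real)]"
    by (rule pmf_of_list_wfI) auto
  then show ?thesis unfolding lrm_def assms using expectation_pmf_of_list[of _ f] by simp
qed

(* Cost under LRM of a point at offset w from the left end of an arc of length L. *)
definition lrm_cost :: "real \<Rightarrow> real \<Rightarrow> real" where
  "lrm_cost L w = arcd w / 4 + arcd (w - L) / 4 + arcd (w - L/2) / 2"

lemma cost_lrm:
  assumes "lrm_arc n x = (l, L)"
  shows "cost (lrm n x) z = lrm_cost L (frac (z - l))"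
  unfolding cost_def expectation_lrm[OF assms] cdist_offset lrm_cost_def
  by (simp only: cdist_from_base)

lemma lrm_cost_ge_half_dist:
  assumes "0 \<le> w" "w < 1" "0 \<le> t" "t \<le> L" "L \<le> 1/2"
  shows "arcd (w - t) / 2 \<le> lrm_cost L w"
proof -
  have a: "arcd w = min \<bar>w\<bar> (1 - \<bar>w\<bar>)" "arcd (w - L) = min \<bar>w - L\<bar> (1 - \<bar>w - L\<bar>)"
     "arcd (w - L/2) = min \<bar>w - L/2\<bar> (1 - \<bar>w - L/2\<bar>)"
     "arcd (w - t) = min \<bar>w - t\<bar> (1 - \<bar>w - t\<bar>)"
    using assms by (intro arcd_tent; linarith)+
  have b: "arcd (w - t) \<le> 1 - \<bar>w - t\<bar>" "arcd (w - t) \<le> \<bar>w - t\<bar>" unfolding a by auto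
  show ?thesis
  proof (cases "w \<le> L")
    case True
    then show ?thesis using b assms unfolding lrm_cost_def a
      by (auto simp: min_def abs_if field_simps; linarith?)
  next
    case False
    then show ?thesis using b assms unfolding lrm_cost_def a
      by (auto simp: min_def abs_if field_simps; linarith?)
  qed
qed

lemma lrm_cost_antipode_in_arc:
  assumes "0 \<le> w" "w < 1" "frac (w + 1/2) \<le> L" "L \<le> 1/2"
  shows "1/4 \<le> lrm_cost L w"
proof -
  have c: "w + 1/2 \<le> L \<or> (w \<ge> 1/2 \<and> w - 1/2 \<le> L)"
  proof (cases "w < 1/2")
    case True
    then have "frac (w + 1/2) = w + 1/2" using assms by (simp add: frac_eq)
    then show ?thesis using assms by simp
  next
    case False
    then have "frac (w + 1/2) = w - 1/2" using assms frac_wrap[of "w + 1/2"] by simp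
    then show ?thesis using assms False by simp
  qed
  have "0 \<le> L" using assms(3) frac_ge_0[of "w + 1/2"] by linarith
  then have a: "arcd w = min \<bar>w\<bar> (1 - \<bar>w\<bar>)" "arcd (w - L) = min \<bar>w - L\<bar> (1 - \<bar>w - L\<bar>)"
     "arcd (w - L/2) = min \<bar>w - L/2\<bar> (1 - \<bar>w - L/2\<bar>)"
    using assms by (intro arcd_tent; linarith)+
  show ?thesis unfolding lrm_cost_def a using assms c
    by (auto simp: min_def abs_if field_simps; linarith?)
qed

lemma lrm_cost_inside:
  assumes "0 \<le> w" "w \<le> L" "L \<le> 1/2"
  shows "lrm_cost L w = (if L/2 \<le> w then arcd w else arcd (w - L)) / 2"
proof -
  have a: "arcd w = min \<bar>w\<bar> (1 - \<bar>w\<bar>)" "arcd (w - L) = min \<bar>w - L\<bar> (1 - \<bar>w - L\<bar>)"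
     "arcd (w - L/2) = min \<bar>w - L/2\<bar> (1 - \<bar>w - L/2\<bar>)"
    using assms by (intro arcd_tent; linarith)+
  show ?thesis unfolding lrm_cost_def a using assms
    by (auto simp: min_def abs_if field_simps; linarith?)
qed

lemma arcd_arc_ends:
  assumes "0 \<le> w" "w < 1" "0 \<le> L" "L \<le> 1/2"
  shows "L \<le> arcd w + arcd (w - L)"
proof -
  have a: "arcd w = min \<bar>w\<bar> (1 - \<bar>w\<bar>)" "arcd (w - L) = min \<bar>w - L\<bar> (1 - \<bar>w - L\<bar>)"
    using assms by (intro arcd_tent; linarith)+
  show ?thesis unfolding a using assms by (auto simp: min_def abs_if field_simps)
qed

lemma arcd_within_arc:
  assumes "0 \<le> w" "w \<le> L" "L \<le> 1/2"
  shows "arcd w \<le> L" "arcd (w - L) \<le> L" "arcd (w - L/2) \<le> L/2"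
proof -
  have a: "arcd w = min \<bar>w\<bar> (1 - \<bar>w\<bar>)" "arcd (w - L) = min \<bar>w - L\<bar> (1 - \<bar>w - L\<bar>)"
     "arcd (w - L/2) = min \<bar>w - L/2\<bar> (1 - \<bar>w - L/2\<bar>)"
    using assms by (intro arcd_tent; linarith)+
  show "arcd w \<le> L" "arcd (w - L) \<le> L" "arcd (w - L/2) \<le> L/2"
    unfolding a using assms by (auto simp: min_def abs_if field_simps)
qed

lemma lrm_cost_agent:
  assumes n: "n \<ge> 1" and p: "profile n x" and s: "one_semicircle n x" and i: "i < n"
  shows "\<exists>k<n. cost (lrm n x) (x i) = cdist (x i) (x k) / 2"
proof -
  obtain l L where e: "lrm_arc n x = (l, L)" by (cases "lrm_arc n x") auto
  obtain i0 where i0: "i0 < n" "x i0 = l" using lrm_arc(4)[OF n p e] by blast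
  obtain j0 where j0: "j0 < n" "x j0 = frac (l + L)" using lrm_arc(5)[OF n p e] by blast
  let ?w = "frac (x i - l)"
  have w: "0 \<le> ?w" "?w \<le> L" "L \<le> 1/2"
    using lrm_arc_offset[OF n p e i] lrm_arc_le_half[OF n p s e] by auto
  show ?thesis
  proof (cases "L/2 \<le> ?w")
    case True
    have "cost (lrm n x) (x i) = arcd ?w / 2"
      unfolding cost_lrm[OF e] using lrm_cost_inside[OF w] True by simp
    also have "\<dots> = cdist (x i) (x i0) / 2" unfolding i0(2) cdist_from_base ..
    finally show ?thesis using i0(1) by blast
  next
    case False
    have "cost (lrm n x) (x i) = arcd (?w - L) / 2"
      unfolding cost_lrm[OF e] using lrm_cost_inside[OF w] False by simp
    also have "\<dots> = cdist (x i) (x j0) / 2" unfolding j0(2) cdist_offset ..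
    finally show ?thesis using j0(1) by blast
  qed
qed

lemma lrm_cost_ge_agent:
  assumes n: "n \<ge> 1" and p: "profile n y" and s: "one_semicircle n y" and k: "k < n"
  shows "cdist z (y k) / 2 \<le> cost (lrm n y) z"
proof -
  obtain l L where e: "lrm_arc n y = (l, L)" by (cases "lrm_arc n y") auto
  show ?thesis
    unfolding cost_lrm[OF e] cdist_relative[of z "y k" l]
    using lrm_arc_offset[OF n p e k] lrm_arc_le_half[OF n p s e] frac_lt_1[of "z - l"]
    by (intro lrm_cost_ge_half_dist) auto
qed

lemma lrm_cost_ge_quarter:
  assumes n: "n \<ge> 1" and p: "profile n y" and s: "one_semicircle n y"
    and e: "lrm_arc n y = (l, L)" and a: "in_arc l L (antipode z)"
  shows "1/4 \<le> cost (lrm n y) z"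
  unfolding cost_lrm[OF e] using a frac_antipode_offset[of z l] lrm_arc_le_half[OF n p s e]
    frac_lt_1[of "z - l"] unfolding in_arc_def by (intro lrm_cost_antipode_in_arc) auto

lemma antipode_in_arc:
  assumes ns: "\<not> one_semicircle n x" and i: "i < n"
    and cov: "\<forall>j<n. j \<noteq> i \<longrightarrow> in_arc l L (x j)" and L: "L \<le> 1/2"
  shows "in_arc l L (antipode (x i))"
proof (rule ccontr)
  let ?w = "frac (x i - l)"
  assume "\<not> ?thesis"
  then have gt: "L < frac (?w + 1/2)" using frac_antipode_offset[of "x i" l] unfolding in_arc_def by simp
  show False
  proof (cases "?w \<le> 1/2")
    case True
    have "in_arc l (1/2) (x j)" if "j < n" for j
      using True cov L that unfolding in_arc_def by (cases "j = i") force+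
    then have "covers n x l (1/2)" unfolding covers_def by blast
    then show False using ns unfolding one_semicircle_def by blast
  next
    case False
    have w1: "?w < 1" by (rule frac_lt_1)
    have "frac (?w + 1/2) = ?w - 1/2" using False w1 frac_wrap[of "?w + 1/2"] by simp
    then have wL: "L < ?w - 1/2" using gt by simp
    have "in_arc (x i) (1/2) (x j)" if j: "j < n" for j
    proof (cases "j = i")
      case False
      let ?v = "frac (x j - l)"
      have v: "?v \<le> L" "0 \<le> ?v" using cov j False unfolding in_arc_def by auto
      have "frac (x j - x i) = frac (?v - ?w)" using frac_diff[of "x j - l" "x i - l"] by simp
      also have "\<dots> = ?v - ?w + 1"
        using frac_1_eq[of "?v - ?w"] v wL w1 by (simp add: frac_eq)
      finally show ?thesis using v wL unfolding in_arc_def by simp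
    qed (simp add: in_arc_def)
    then have "covers n x (x i) (1/2)" unfolding covers_def by blast
    then show False using ns unfolding one_semicircle_def by blast
  qed
qed

(* Antiderivative of arcd on [0, 1]: tent_prim u is the integral of arcd over [0, u]. *)
definition tent_prim :: "real \<Rightarrow> real" where
  "tent_prim u = (if u \<le> 1/2 then u^2/2 else 1/4 - (1-u)^2/2)"

(* Integral of arcd over [u, u + g], for 0 <= u < 1 and 0 < g < 1, possibly wrapping past 1. *)
definition tent_int :: "real \<Rightarrow> real \<Rightarrow> real" where
  "tent_int u g = (if u + g \<le> 1 then tent_prim (u+g) - tent_prim u
                   else 1/4 - tent_prim u + tent_prim (u+g-1))"

(* By how much the midpoint rule on [u, u + g] falls short of tent_int when the interval
   wraps past 1, i.e. contains the minimum of arcd at the integer 1. *)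
definition wrap_defect :: "real \<Rightarrow> real \<Rightarrow> real" where
  "wrap_defect u g = (if 1 < u + g then (min (1-u) (u+g-1))^2 else 0)"

lemma wrap_defect_nonneg: "0 \<le> wrap_defect u g"
  by (simp add: wrap_defect_def)

lemma tent_prim_low: "u \<le> 1/2 \<Longrightarrow> tent_prim u = u^2/2"
  by (simp add: tent_prim_def)

lemma tent_prim_high: "1/2 \<le> u \<Longrightarrow> tent_prim u = 1/4 - (1-u)^2/2"
proof (cases "u = 1/2")
  case True
  show ?thesis unfolding True by (simp add: tent_prim_def power2_eq_square)
qed (auto simp: tent_prim_def)

(* tent_int as the increment of one potential plus g/4; this makes sums over gaps telescope. *)
lemma tent_int_telescoping:
  assumes "0 \<le> u" "u < 1" "0 < g" "g < 1"
  shows "tent_int u g = tent_prim (frac (u+g)) - frac (u+g)/4 - tent_prim u + u/4 + g/4"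
proof (cases "u + g < 1")
  case True
  then have "frac (u+g) = u+g" using assms by (simp add: frac_eq)
  then show ?thesis using True by (simp add: tent_int_def field_simps)
next
  case False
  have f: "frac (u+g) = u + g - 1" using assms False frac_wrap[of "u + g"] by simp
  show ?thesis
  proof (cases "u + g = 1")
    case True
    then show ?thesis using f by (simp add: tent_int_def tent_prim_def)
  next
    case False
    then show ?thesis unfolding tent_int_def f using \<open>\<not> u + g < 1\<close> by (simp add: field_simps)
  qed
qed

(* The midpoint rule g * arcd (u + g/2) against the integral, according to the position of the
   interval [u, u + g] relative to the peak 1/2 and the wrap point 1 of the tent function. *)
lemma midpoint_rule_rising: assumes "0 \<le> u" "0 < g" "u + g \<le> 1/2"
  shows "g * arcd (u + g/2) = tent_int u g - wrap_defect u g"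
proof -
  have d: "arcd (u + g/2) = u + g/2" using assms by (intro arcd_rising) auto
  show ?thesis unfolding d using assms
    by (simp add: tent_int_def wrap_defect_def tent_prim_low tent_prim_high power2_eq_square field_simps)
qed

lemma midpoint_rule_falling: assumes "1/2 \<le> u" "0 < g" "u + g \<le> 1"
  shows "g * arcd (u + g/2) = tent_int u g - wrap_defect u g"
proof -
  have d: "arcd (u + g/2) = 1 - (u + g/2)" using assms by (intro arcd_falling) auto
  show ?thesis unfolding d using assms
    by (simp add: tent_int_def wrap_defect_def tent_prim_low tent_prim_high power2_eq_square field_simps)
qed

lemma midpoint_rule_peak: assumes "0 \<le> u" "u < 1/2" "1/2 < u + g" "g < 1/2"
  shows "tent_int u g - wrap_defect u g \<le> g * arcd (u + g/2)"
proof -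
  have ig: "tent_int u g - wrap_defect u g = 1/4 - (1-u-g)^2/2 - u^2/2"
    using assms by (simp add: tent_int_def wrap_defect_def tent_prim_def)
  show ?thesis
  proof (cases "u + g/2 \<le> 1/2")
    case True
    then have d: "arcd (u + g/2) = u + g/2" using assms by (intro arcd_rising) auto
    have "g * (u + g/2) - (1/4 - (1-u-g)^2/2 - u^2/2) = (u+g-1/2)^2"
      by (simp add: power2_eq_square field_simps)
    then show ?thesis unfolding ig d using zero_le_power2[of "u+g-1/2"] by linarith
  next
    case False
    then have d: "arcd (u + g/2) = 1 - (u + g/2)" using assms by (intro arcd_falling) auto
    have "g * (1 - (u + g/2)) - (1/4 - (1-u-g)^2/2 - u^2/2) = (1/2 - u)^2"
      by (simp add: power2_eq_square field_simps)
    then show ?thesis unfolding ig d using zero_le_power2[of "1/2 - u"] by linarith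
  qed
qed

lemma midpoint_rule_wrap: assumes "u < 1" "1 < u + g" "g < 1/2"
  shows "g * arcd (u + g/2) = tent_int u g - wrap_defect u g"
proof -
  have ig: "tent_int u g = 1/4 - (1/4 - (1-u)^2/2) + (u+g-1)^2/2"
    using assms by (simp add: tent_int_def tent_prim_def)
  show ?thesis
  proof (cases "u + g/2 \<le> 1")
    case True
    then have d: "arcd (u + g/2) = 1 - (u + g/2)" using assms by (intro arcd_falling) auto
    have "min (1-u) (u+g-1) = u+g-1" using True by (simp add: min_def)
    then show ?thesis unfolding ig d wrap_defect_def using assms by (simp add: power2_eq_square field_simps)
  next
    case False
    then have d: "arcd (u + g/2) = u + g/2 - 1" using assms by (intro arcd_rising_again) auto
    have "min (1-u) (u+g-1) = 1-u" using False by (simp add: min_def)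
    then show ?thesis unfolding ig d wrap_defect_def using assms by (simp add: power2_eq_square field_simps)
  qed
qed

lemma midpoint_rule_ge: assumes "0 \<le> u" "u < 1" "0 < g" "g < 1/2"
  shows "tent_int u g - wrap_defect u g \<le> g * arcd (u + g/2)"
proof -
  consider "u + g \<le> 1/2" | "1/2 \<le> u \<and> u + g \<le> 1" | "u < 1/2 \<and> 1/2 < u + g" | "1 < u + g"
    using assms by linarith
  then show ?thesis
  proof cases
    case 1 then show ?thesis using midpoint_rule_rising[of u g] assms by simp
  next
    case 2 then show ?thesis using midpoint_rule_falling[of u g] assms by simp
  next
    case 3 then show ?thesis using midpoint_rule_peak[of u g] assms by simp
  next
    case 4 then show ?thesis using midpoint_rule_wrap[of u g] assms by simp
  qed
qed

lemma midpoint_rule_eq: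
  assumes "0 \<le> u" "u < 1" "0 < g" "g < 1/2" "\<not> (u < 1/2 \<and> 1/2 < u + g)"
  shows "g * arcd (u + g/2) = tent_int u g - wrap_defect u g"
proof -
  consider "u + g \<le> 1/2" | "1/2 \<le> u \<and> u + g \<le> 1" | "1 < u + g"
    using assms by linarith
  then show ?thesis
  proof cases
    case 1 then show ?thesis using midpoint_rule_rising[of u g] assms by simp
  next
    case 2 then show ?thesis using midpoint_rule_falling[of u g] assms by simp
  next
    case 3 then show ?thesis using midpoint_rule_wrap[of u g] assms by simp
  qed
qed

lemma gap_le_frac: "finite A \<Longrightarrow> b \<in> A \<Longrightarrow> b \<noteq> a \<Longrightarrow> gap A a \<le> frac (b - a)"
  unfolding gap_def by (intro Min_le) auto

definition next_cut :: "real set \<Rightarrow> real \<Rightarrow> real" where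
  "next_cut A a = (SOME c. c \<in> A \<and> c \<noteq> a \<and> gap A a = frac (c - a))"

locale cut_set =
  fixes A :: "real set"
  assumes fin: "finite A" and sub: "A \<subseteq> {0..<1}" and two: "\<exists>a b. a \<in> A \<and> b \<in> A \<and> a \<noteq> b"
begin

lemma cut_unit: "a \<in> A \<Longrightarrow> a \<in> {0..<1}"
  using sub by auto

lemma gap_le: "a \<in> A \<Longrightarrow> b \<in> A \<Longrightarrow> b \<noteq> a \<Longrightarrow> gap A a \<le> frac (b - a)"
  by (rule gap_le_frac[OF fin])

(* Since A has a second point, the gap is attained by a cut point. *)
lemma gap_attained:
  assumes "a \<in> A"
  shows "\<exists>c\<in>A. c \<noteq> a \<and> gap A a = frac (c - a)"
proof -
  obtain b where b: "b \<in> A" "b \<noteq> a" using two assms by metis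
  have "gap A a \<in> insert 1 ((\<lambda>b. frac (b - a)) ` (A - {a}))"
    unfolding gap_def using fin by (intro Min_in) auto
  moreover have "gap A a \<noteq> 1" using gap_le[OF assms b(1,2)] frac_lt_1[of "b - a"] by auto
  ultimately show ?thesis by auto
qed

lemma gap_pos: assumes "a \<in> A" shows "0 < gap A a"
proof -
  obtain c where "c \<in> A" "c \<noteq> a" "gap A a = frac (c - a)" using gap_attained[OF assms] by blast
  then show ?thesis using frac_diff_unit_pos[of a c] cut_unit assms by auto
qed

lemma next_cut: assumes "a \<in> A"
  shows "next_cut A a \<in> A" "next_cut A a \<noteq> a" "gap A a = frac (next_cut A a - a)"
proof -
  have "\<exists>c. c \<in> A \<and> c \<noteq> a \<and> gap A a = frac (c - a)" using gap_attained[OF assms] by blast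
  then have "next_cut A a \<in> A \<and> next_cut A a \<noteq> a \<and> gap A a = frac (next_cut A a - a)"
    unfolding next_cut_def by (rule someI_ex)
  then show "next_cut A a \<in> A" "next_cut A a \<noteq> a" "gap A a = frac (next_cut A a - a)" by auto
qed

(* Two cut points with the same successor coincide: otherwise the one farther from the common
   successor would have the other inside its gap. *)
lemma next_cut_inj: "inj_on (next_cut A) A"
proof -
  have False if a: "a \<in> A" and a': "a' \<in> A" and ne: "a \<noteq> a'"
    and eq: "next_cut A a = next_cut A a'" and le: "frac (next_cut A a - a) \<le> frac (next_cut A a' - a')"
    for a a'
  proof -
    let ?c = "next_cut A a"
    have "frac (a - a') = frac ((?c - a') - (?c - a))" by simp
    also have "\<dots> = frac (?c - a') - frac (?c - a)" using le eq by (intro frac_diff_pos) simp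
    finally have e: "frac (a - a') = gap A a' - gap A a"
      using next_cut(3)[OF a] next_cut(3)[OF a'] eq by simp
    have "gap A a' \<le> frac (a - a')" using gap_le[OF a' a ne] .
    then show False using e gap_pos[OF a] by simp
  qed
  then show ?thesis unfolding inj_on_def by (metis linear)
qed

lemma next_cut_image: "next_cut A ` A = A"
  using fin next_cut(1) next_cut_inj by (intro endo_inj_surj) auto

lemma sum_next_cut: "(\<Sum>a\<in>A. F (next_cut A a)) = (\<Sum>a\<in>A. F a)"
proof -
  have "(\<Sum>a\<in>A. F a) = (\<Sum>a\<in>next_cut A ` A. F a)" using next_cut_image by simp
  also have "\<dots> = (\<Sum>a\<in>A. F (next_cut A a))" using next_cut_inj by (simp add: sum.reindex)
  finally show ?thesis by simp
qed

lemma next_cut_less_iff: assumes a: "a \<in> A" shows "next_cut A a < a \<longleftrightarrow> a = Max A"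
proof
  assume "a = Max A"
  then show "next_cut A a < a" using next_cut[OF a] fin by (metis Max_ge order_less_le)
next
  assume lt: "next_cut A a < a"
  show "a = Max A"
  proof (rule ccontr)
    assume ne: "a \<noteq> Max A"
    have m: "Max A \<in> A" using fin a by (intro Max_in) auto
    have "a \<le> Max A" using fin a by simp
    then have alt: "a < Max A" using ne by simp
    have "gap A a \<le> frac (Max A - a)" using gap_le[OF a m] ne by simp
    also have "\<dots> = Max A - a" using frac_diff_unit[of a "Max A"] cut_unit[OF a] cut_unit[OF m] alt by simp
    finally have "gap A a \<le> Max A - a" .
    moreover have "gap A a = next_cut A a - a + 1"
      using next_cut(3)[OF a] frac_diff_unit[of a "next_cut A a"] cut_unit[OF a]
        cut_unit[OF next_cut(1)[OF a]] lt by simp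
    ultimately show False using cut_unit[OF m] cut_unit[OF next_cut(1)[OF a]] by simp
  qed
qed

(* The gaps have total length 1: sum the successor offsets, adding 1 for the wrapping one. *)
lemma sum_gap: "(\<Sum>a\<in>A. gap A a) = 1"
proof -
  have "(\<Sum>a\<in>A. gap A a) = (\<Sum>a\<in>A. (next_cut A a - a) + (if a = Max A then 1 else 0))"
  proof (rule sum.cong[OF refl])
    fix a assume a: "a \<in> A"
    show "gap A a = (next_cut A a - a) + (if a = Max A then 1 else 0)"
      using next_cut(3)[OF a] frac_diff_unit[of a "next_cut A a"] cut_unit[OF a]
        cut_unit[OF next_cut(1)[OF a]] next_cut_less_iff[OF a] by (auto split: if_splits)
  qed
  also have "\<dots> = (\<Sum>a\<in>A. next_cut A a) - (\<Sum>a\<in>A. a) + (\<Sum>a\<in>A. if a = Max A then 1 else 0)"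
    by (simp add: sum.distrib sum_subtractf)
  also have "\<dots> = 1"
  proof -
    have "Max A \<in> A" using fin two by (intro Max_in) auto
    then show ?thesis using sum_next_cut[of "\<lambda>a. a"] fin by simp
  qed
  finally show ?thesis .
qed

definition rc_weight :: "real \<Rightarrow> real" where
  "rc_weight q = (\<Sum>a\<in>A. if frac (a + gap A a / 2) = q then gap A a else 0)"

lemma rc_weight_nonneg: "0 \<le> rc_weight q"
  unfolding rc_weight_def using gap_pos by (intro sum_nonneg) (auto intro: less_imp_le)

lemma rc_weight_outside: "q \<notin> (\<lambda>a. frac (a + gap A a / 2)) ` A \<Longrightarrow> rc_weight q = 0"
  unfolding rc_weight_def by (intro sum.neutral) auto

lemma sum_rc_weight: "(\<Sum>q\<in>(\<lambda>a. frac (a + gap A a / 2)) ` A. rc_weight q) = 1"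
proof -
  let ?M = "(\<lambda>a. frac (a + gap A a / 2)) ` A"
  have "(\<Sum>q\<in>?M. rc_weight q) = (\<Sum>a\<in>A. \<Sum>q\<in>?M. if frac (a + gap A a / 2) = q then gap A a else 0)"
    unfolding rc_weight_def by (rule sum.swap)
  also have "\<dots> = (\<Sum>a\<in>A. gap A a)"
    using fin by (intro sum.cong refl) (simp add: sum.delta)
  finally show ?thesis using sum_gap by simp
qed

lemma rc_weight_prob: "(\<integral>\<^sup>+x. ennreal (rc_weight x) \<partial>count_space UNIV) = 1"
proof -
  let ?M = "(\<lambda>a. frac (a + gap A a / 2)) ` A"
  have "(\<integral>\<^sup>+x. ennreal (rc_weight x) \<partial>count_space UNIV) = (\<Sum>q\<in>?M. ennreal (rc_weight q))"
    using fin rc_weight_outside by (intro nn_integral_count_space') auto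
  also have "\<dots> = ennreal (\<Sum>q\<in>?M. rc_weight q)" using rc_weight_nonneg by (simp add: sum_ennreal)
  also have "\<dots> = 1" using sum_rc_weight by simp
  finally show ?thesis .
qed

lemma pmf_rc_weight: "pmf (embed_pmf rc_weight) q = rc_weight q"
  using rc_weight_nonneg rc_weight_prob by (rule pmf_embed_pmf)

lemma expectation_rc_weight:
  "measure_pmf.expectation (embed_pmf rc_weight) (h :: real \<Rightarrow> real)
     = (\<Sum>a\<in>A. gap A a * h (frac (a + gap A a / 2)))"
proof -
  let ?M = "(\<lambda>a. frac (a + gap A a / 2)) ` A"
  have "measure_pmf.expectation (embed_pmf rc_weight) h = (\<Sum>q\<in>?M. h q * pmf (embed_pmf rc_weight) q)"
  proof (rule integral_measure_pmf_real)
    show "finite ?M" using fin by simp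
    fix q assume "q \<in> set_pmf (embed_pmf rc_weight)"
    then have "rc_weight q \<noteq> 0" by (simp add: set_pmf_eq pmf_rc_weight)
    then show "q \<in> ?M" using rc_weight_outside by blast
  qed
  also have "\<dots> = (\<Sum>q\<in>?M. \<Sum>a\<in>A. if frac (a + gap A a / 2) = q then h q * gap A a else 0)"
    unfolding pmf_rc_weight rc_weight_def by (simp add: sum_distrib_left if_distrib cong: if_cong)
  also have "\<dots> = (\<Sum>a\<in>A. \<Sum>q\<in>?M. if frac (a + gap A a / 2) = q then h q * gap A a else 0)"
    by (rule sum.swap)
  also have "\<dots> = (\<Sum>a\<in>A. gap A a * h (frac (a + gap A a / 2)))"
    using fin by (intro sum.cong refl) (simp add: sum.delta mult.commute)
  finally show ?thesis .
qed

lemma gap_lt1: "a \<in> A \<Longrightarrow> gap A a < 1"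
  using next_cut(3)[of a] frac_lt_1[of "next_cut A a - a"] by simp

lemma frac_next_cut: "a \<in> A \<Longrightarrow> frac (frac (a - y) + gap A a) = frac (next_cut A a - y)"
  using next_cut(3)[of a] frac_add_frac[of "a - y" "next_cut A a - a"] by simp

lemma next_cut_past:
  assumes a: "a \<in> A" and past: "1 \<le> frac (a - y) + gap A a"
  shows "frac (next_cut A a - y) = frac (a - y) + gap A a - 1"
  using frac_next_cut[OF a, of y] frac_wrap[of "frac (a - y) + gap A a"] past
    gap_lt1[OF a] frac_lt_1[of "a - y"] by simp

lemma cdist_midpoint: "a \<in> A \<Longrightarrow> cdist y (frac (a + gap A a / 2)) = arcd (frac (a - y) + gap A a / 2)"
proof -
  have "cdist y (frac (a + gap A a / 2)) = cdist y (a + gap A a / 2)" by (rule cdist_frac_right)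
  also have "\<dots> = arcd (frac (a + gap A a / 2 - y))" by (rule cdist_to_base)
  also have "frac (a + gap A a / 2 - y) = frac (frac (a - y) + gap A a / 2)"
    using frac_add_simps(1)[of "a - y" "gap A a / 2"] by (simp add: algebra_simps)
  finally show ?thesis by (simp only: arcd_frac)
qed

(* Seen from y, the gaps tile the circle, so their tent integrals add up to the integral of
   the distance to y over the whole circle, which is 1/4. *)
lemma sum_tent_int: "(\<Sum>a\<in>A. tent_int (frac (a - y)) (gap A a)) = 1/4"
proof -
  define Q where "Q t = tent_prim (frac (t - y)) - frac (t - y) / 4" for t
  have "(\<Sum>a\<in>A. tent_int (frac (a - y)) (gap A a)) = (\<Sum>a\<in>A. Q (next_cut A a) - Q a + gap A a / 4)"
  proof (rule sum.cong[OF refl])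
    fix a assume a: "a \<in> A"
    have "tent_int (frac (a - y)) (gap A a) = tent_prim (frac (frac (a - y) + gap A a)) - frac (frac (a - y) + gap A a)/4
        - tent_prim (frac (a - y)) + frac (a - y)/4 + gap A a/4"
      using gap_pos[OF a] gap_lt1[OF a] frac_lt_1[of "a - y"] by (intro tent_int_telescoping) auto
    then show "tent_int (frac (a - y)) (gap A a) = Q (next_cut A a) - Q a + gap A a / 4"
      unfolding Q_def frac_next_cut[OF a] by simp
  qed
  also have "\<dots> = (\<Sum>a\<in>A. Q (next_cut A a)) - (\<Sum>a\<in>A. Q a) + (\<Sum>a\<in>A. gap A a) / 4"
    by (simp add: sum.distrib sum_subtractf sum_divide_distrib)
  also have "\<dots> = 1/4" using sum_next_cut[of Q] sum_gap by simp
  finally show ?thesis .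
qed

(* The gap containing y: the last cut point before y reaches y. *)
lemma gap_around: "\<exists>a\<in>A. 1 \<le> frac (a - y) + gap A a"
proof -
  have ne: "A \<noteq> {}" using two by auto
  have "Max ((\<lambda>a. frac (a - y)) ` A) \<in> (\<lambda>a. frac (a - y)) ` A" using fin ne by (intro Max_in) auto
  then obtain a0 where a0: "a0 \<in> A" "frac (a0 - y) = Max ((\<lambda>a. frac (a - y)) ` A)" by auto
  have "1 \<le> frac (a0 - y) + gap A a0"
  proof (rule ccontr)
    assume "\<not> ?thesis"
    then have "frac (frac (a0 - y) + gap A a0) = frac (a0 - y) + gap A a0"
      using gap_pos[OF a0(1)] by (intro frac_unit) auto
    then have "frac (next_cut A a0 - y) = frac (a0 - y) + gap A a0" using frac_next_cut[OF a0(1)] by simp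
    moreover have "frac (next_cut A a0 - y) \<le> frac (a0 - y)" unfolding a0(2) using fin next_cut(1)[OF a0(1)] by simp
    ultimately show False using gap_pos[OF a0(1)] by simp
  qed
  then show ?thesis using a0 by blast
qed

lemma wrapping_gap_unique:
  assumes a: "a \<in> A" and a': "a' \<in> A"
    and h: "1 < frac (a - y) + gap A a" and h': "1 < frac (a' - y) + gap A a'"
  shows "a = a'"
proof -
  have False if b: "b \<in> A" and b': "b' \<in> A" and ne: "b \<noteq> b'"
    and wrap: "1 < frac (b - y) + gap A b" and le: "frac (b - y) \<le> frac (b' - y)" for b b'
  proof -
    have "frac (b' - b) = frac ((b' - y) - (b - y))" by simp
    also have "\<dots> = frac (b' - y) - frac (b - y)" using le by (rule frac_diff_pos)
    finally have e: "frac (b' - b) = frac (b' - y) - frac (b - y)" .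
    have "gap A b \<le> frac (b' - b)" using gap_le[OF b b'] ne by simp
    then show False using e wrap frac_lt_1[of "b' - y"] by simp
  qed
  then show ?thesis using a a' h h' by (metis linear)
qed

lemma wrap_defect_le:
  assumes a: "a \<in> A" and b: "b \<in> A" and small: "\<forall>a\<in>A. gap A a < 1/2"
  shows "wrap_defect (frac (a - y)) (gap A a) \<le> (cdist y b)^2"
proof (cases "1 < frac (a - y) + gap A a")
  case False
  then show ?thesis by (simp add: wrap_defect_def)
next
  case True
  let ?u = "frac (a - y)" let ?g = "gap A a"
  have g: "0 < ?g" "?g < 1/2" using gap_pos[OF a] small a by auto
  have u: "?u < 1" by (rule frac_lt_1)
  have mpos: "0 \<le> min (1 - ?u) (?u + ?g - 1)" using True u by simp
  have key: "min (1 - ?u) (?u + ?g - 1) \<le> cdist y b"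
  proof (cases "b = a")
    case True
    have "cdist y b = arcd ?u" using True by (simp add: cdist_to_base)
    also have "\<dots> = 1 - ?u" using \<open>1 < ?u + ?g\<close> g u by (intro arcd_falling) auto
    finally show ?thesis by simp
  next
    case False
    let ?b = "frac (b - a)"
    have bg: "?g \<le> ?b" using gap_le[OF a b False] .
    have b1: "?b < 1" by (rule frac_lt_1)
    have "frac (b - y) = frac (?u + ?b)" using frac_add_frac[of "a - y" "b - a"] by simp
    also have "\<dots> = ?u + ?b - 1"
    proof -
      have "frac (?u + ?b - 1) = ?u + ?b - 1" using bg b1 u \<open>1 < ?u + ?g\<close> by (intro frac_unit) auto
      then show ?thesis using frac_1_eq[of "?u + ?b - 1"] by simp
    qed
    finally have fb: "frac (b - y) = ?u + ?b - 1" .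
    have "cdist y b = min (?u + ?b - 1) (1 - (?u + ?b - 1))"
      unfolding cdist_to_base fb using bg b1 u \<open>1 < ?u + ?g\<close> by (subst arcd_tent) auto
    then show ?thesis using bg b1 by (auto simp: min_def)
  qed
  have "wrap_defect ?u ?g = (min (1 - ?u) (?u + ?g - 1))^2" using True by (simp add: wrap_defect_def)
  also have "\<dots> \<le> (cdist y b)^2" using key mpos by (intro power_mono) auto
  finally show ?thesis .
qed

lemma sum_wrap_defect_le:
  assumes b: "b \<in> A" and small: "\<forall>a\<in>A. gap A a < 1/2"
  shows "(\<Sum>a\<in>A. wrap_defect (frac (a - y)) (gap A a)) \<le> (cdist y b)^2"
proof (cases "\<exists>a0\<in>A. 1 < frac (a0 - y) + gap A a0")
  case False
  then have "(\<Sum>a\<in>A. wrap_defect (frac (a - y)) (gap A a)) = 0"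
    by (intro sum.neutral) (auto simp: wrap_defect_def)
  then show ?thesis by simp
next
  case True
  then obtain a0 where a0: "a0 \<in> A" "1 < frac (a0 - y) + gap A a0" by blast
  have "(\<Sum>a\<in>A. wrap_defect (frac (a - y)) (gap A a))
      = (\<Sum>a\<in>A. if a = a0 then wrap_defect (frac (a0 - y)) (gap A a0) else 0)"
  proof (rule sum.cong[OF refl])
    fix a assume a: "a \<in> A"
    show "wrap_defect (frac (a - y)) (gap A a)
        = (if a = a0 then wrap_defect (frac (a0 - y)) (gap A a0) else 0)"
    proof (cases "a = a0")
      case False
      then have "\<not> 1 < frac (a - y) + gap A a" using wrapping_gap_unique[OF a a0(1) _ a0(2)] by blast
      then show ?thesis using False by (simp add: wrap_defect_def)
    qed simp
  qed
  also have "\<dots> = wrap_defect (frac (a0 - y)) (gap A a0)" using fin a0(1) by (simp add: sum.delta)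
  also have "\<dots> \<le> (cdist y b)^2" by (rule wrap_defect_le[OF a0(1) b small])
  finally show ?thesis .
qed

lemma no_straddle:
  assumes a: "a \<in> A" and c: "frac (y + 1/2) \<in> A"
  shows "\<not> (frac (a - y) < 1/2 \<and> 1/2 < frac (a - y) + gap A a)"
proof
  assume h: "frac (a - y) < 1/2 \<and> 1/2 < frac (a - y) + gap A a"
  let ?c = "frac (y + 1/2)"
  show False
  proof (cases "?c = a")
    case True
    have "frac (a - y) = frac (frac (y + 1/2) - y)" using True by simp
    also have "\<dots> = frac (1/2 :: real)" using frac_add_simps(1)[of "y + 1/2" "- y"] by simp
    also have "\<dots> = 1/2" by (simp add: frac_eq)
    finally show False using h by simp
  next
    case False
    have "gap A a \<le> frac (?c - a)" using gap_le[OF a c False] .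
    also have "frac (?c - a) = frac (1/2 - frac (a - y))"
    proof -
      have "frac (?c - a) = frac (y + 1/2 - a)" using frac_add_simps(1)[of "y + 1/2" "- a"] by simp
      also have "\<dots> = frac (1/2 - (a - y))" by (simp add: algebra_simps)
      also have "\<dots> = frac (1/2 - frac (a - y))" by (simp add: frac_diff_simp)
      finally show ?thesis .
    qed
    also have "\<dots> = 1/2 - frac (a - y)"
    proof -
      have h1: "frac (a - y) < 1/2" using h by simp
      have h0: "0 \<le> frac (a - y)" by simp
      show ?thesis by (intro frac_unit) (use h1 h0 in linarith)+
    qed
    finally show False using h by simp
  qed
qed

lemma rc_cost_ge_defect:
  assumes small: "\<forall>a\<in>A. gap A a < 1/2"
  shows "1/4 - (\<Sum>a\<in>A. wrap_defect (frac (a - y)) (gap A a))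
           \<le> (\<Sum>a\<in>A. gap A a * cdist y (frac (a + gap A a / 2)))"
proof -
  have "(\<Sum>a\<in>A. tent_int (frac (a - y)) (gap A a) - wrap_defect (frac (a - y)) (gap A a))
      \<le> (\<Sum>a\<in>A. gap A a * cdist y (frac (a + gap A a / 2)))"
  proof (rule sum_mono)
    fix a assume a: "a \<in> A"
    show "tent_int (frac (a - y)) (gap A a) - wrap_defect (frac (a - y)) (gap A a)
        \<le> gap A a * cdist y (frac (a + gap A a / 2))"
      unfolding cdist_midpoint[OF a] using gap_pos[OF a] small a frac_lt_1[of "a - y"]
      by (intro midpoint_rule_ge) auto
  qed
  then show ?thesis using sum_tent_int by (simp add: sum_subtractf)
qed

lemma rc_cost_eq_defect:
  assumes small: "\<forall>a\<in>A. gap A a < 1/2" and c: "frac (y + 1/2) \<in> A"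
  shows "(\<Sum>a\<in>A. gap A a * cdist y (frac (a + gap A a / 2)))
           = 1/4 - (\<Sum>a\<in>A. wrap_defect (frac (a - y)) (gap A a))"
proof -
  have "(\<Sum>a\<in>A. gap A a * cdist y (frac (a + gap A a / 2)))
      = (\<Sum>a\<in>A. tent_int (frac (a - y)) (gap A a) - wrap_defect (frac (a - y)) (gap A a))"
  proof (rule sum.cong[OF refl])
    fix a assume a: "a \<in> A"
    show "gap A a * cdist y (frac (a + gap A a / 2))
        = tent_int (frac (a - y)) (gap A a) - wrap_defect (frac (a - y)) (gap A a)"
      unfolding cdist_midpoint[OF a] using gap_pos[OF a] small a frac_lt_1[of "a - y"] no_straddle[OF a c]
      by (intro midpoint_rule_eq) auto
  qed
  then show ?thesis using sum_tent_int by (simp add: sum_subtractf)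
qed

lemma rc_cost_lower:
  assumes b: "b \<in> A" and small: "\<forall>a\<in>A. gap A a < 1/2"
  shows "1/4 - (cdist y b)^2 \<le> (\<Sum>a\<in>A. gap A a * cdist y (frac (a + gap A a / 2)))"
  using rc_cost_ge_defect[OF small, of y] sum_wrap_defect_le[OF b small, of y] by linarith

(* Upper bound when the antipode of y is a cut point: the defect of the gap containing y is the
   squared distance from y to the nearer end of that gap. *)
lemma rc_cost_upper:
  assumes small: "\<forall>a\<in>A. gap A a < 1/2" and c: "frac (y + 1/2) \<in> A"
  shows "\<exists>b\<in>A. (\<Sum>a\<in>A. gap A a * cdist y (frac (a + gap A a / 2))) \<le> 1/4 - (cdist y b)^2"
proof -
  note S = rc_cost_eq_defect[OF small c]
  obtain a0 where a0: "a0 \<in> A" "1 \<le> frac (a0 - y) + gap A a0" using gap_around by blast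
  let ?u = "frac (a0 - y)" let ?g = "gap A a0" let ?n = "next_cut A a0"
  have defect: "wrap_defect ?u ?g \<le> (\<Sum>a\<in>A. wrap_defect (frac (a - y)) (gap A a))"
    using fin a0(1) wrap_defect_nonneg by (intro member_le_sum) auto
  have g: "0 < ?g" "?g < 1/2" using gap_pos[OF a0(1)] small a0(1) by auto
  have u: "?u < 1" by (rule frac_lt_1)
  have dn: "cdist y ?n = ?u + ?g - 1"
    unfolding cdist_to_base next_cut_past[OF a0] using a0(2) g u by (intro arcd_rising) auto
  show ?thesis
  proof (cases "?u + ?g = 1")
    case True
    then show ?thesis using S dn next_cut(1)[OF a0(1)] wrap_defect_nonneg
      by (intro bexI[of _ ?n]) (auto intro: sum_nonneg)
  next
    case False
    then have gt: "1 < ?u + ?g" using a0(2) by simp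
    have da: "cdist y a0 = 1 - ?u"
      unfolding cdist_to_base using gt g u by (intro arcd_falling) auto
    have defect0: "wrap_defect ?u ?g = (min (1 - ?u) (?u + ?g - 1))^2"
      using gt by (simp add: wrap_defect_def)
    show ?thesis
    proof (cases "1 - ?u \<le> ?u + ?g - 1")
      case True
      then show ?thesis using S defect defect0 da a0(1) by (intro bexI[of _ a0]) (auto simp: min_def)
    next
      case False
      then show ?thesis using S defect defect0 dn next_cut(1)[OF a0(1)]
        by (intro bexI[of _ ?n]) (auto simp: min_def)
    qed
  qed
qed

lemma midpoint_far:
  assumes a: "a \<in> A" and b: "b \<in> A"
  shows "gap A a / 2 \<le> cdist (frac (a + gap A a / 2)) b"
proof -
  let ?g = "gap A a" let ?b = "frac (b - a)"
  have "cdist (frac (a + ?g / 2)) b = cdist (a + ?g / 2) b" by (rule cdist_frac_left)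
  also have "\<dots> = arcd (a + ?g/2 - b)" by (rule cdist_arcd)
  also have "\<dots> = arcd (frac (a + ?g/2 - b))" by (simp only: arcd_frac)
  also have "frac (a + ?g/2 - b) = frac (?g/2 - ?b)"
    using frac_diff_simp[of "?g/2" "b - a"] by (simp add: algebra_simps)
  finally have e0: "cdist (frac (a + ?g / 2)) b = arcd (frac (?g/2 - ?b))" .
  have e: "cdist (frac (a + ?g / 2)) b = arcd (?b - ?g/2)"
    using e0 arcd_neg[of "?b - ?g/2"] by (simp add: arcd_frac)
  have g: "0 < ?g" "?g < 1" using gap_pos[OF a] gap_lt1[OF a] by auto
  show ?thesis
  proof (cases "b = a")
    case True
    then have "arcd (?b - ?g/2) = arcd (?g/2)" using arcd_neg[of "?g/2"] by simp
    also have "\<dots> = ?g/2" using g by (intro arcd_rising) auto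
    finally show ?thesis using e by simp
  next
    case False
    have bg: "?g \<le> ?b" using gap_le[OF a b False] .
    have "arcd (?b - ?g/2) = min (?b - ?g/2) (1 - (?b - ?g/2))"
      using bg g frac_lt_1[of "b - a"] by (subst arcd_tent) auto
    then show ?thesis using e bg frac_lt_1[of "b - a"] by (auto simp: min_def)
  qed
qed

(* Every point is within half a gap of a cut point: of an end of the gap containing it. *)
lemma near_cut: "\<exists>a\<in>A. \<exists>b\<in>A. cdist y b \<le> gap A a / 2"
proof -
  obtain a0 where a0: "a0 \<in> A" "1 \<le> frac (a0 - y) + gap A a0" using gap_around by blast
  let ?u = "frac (a0 - y)" let ?n = "next_cut A a0"
  have "cdist y ?n \<le> frac (?n - y)" unfolding cdist_to_base arcd_def by simp
  then have dn: "cdist y ?n \<le> ?u + gap A a0 - 1" using next_cut_past[OF a0] by simp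
  have da: "cdist y a0 \<le> 1 - ?u" unfolding cdist_to_base arcd_def by simp
  show ?thesis
  proof (cases "1 - ?u \<le> gap A a0 / 2")
    case True
    then have "cdist y a0 \<le> gap A a0 / 2" using da by linarith
    then show ?thesis using a0(1) by blast
  next
    case False
    then have "cdist y ?n \<le> gap A a0 / 2" using dn by linarith
    then show ?thesis using a0(1) next_cut(1)[OF a0(1)] by blast
  qed
qed

end

lemma antipodes_finite: "finite (antipodes n x)"
  unfolding antipodes_def by simp

lemma antipodes_unit: "antipodes n x \<subseteq> {0..<1}"
  unfolding antipodes_def antipode_def using frac_lt_1 by auto

lemma antipode_in_antipodes: "j < n \<Longrightarrow> antipode (x j) \<in> antipodes n x"
  unfolding antipodes_def by auto

(* A gap of length at least 1/2 between antipodal points is a semicircle containing no antipode,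
   so the opposite semicircle contains all agents. *)
lemma semicircle_of_long_gap:
  assumes a: "a \<in> antipodes n x" and g: "1/2 \<le> gap (antipodes n x) a"
  shows "one_semicircle n x"
  unfolding one_semicircle_def covers_def in_arc_def
proof (intro exI[of _ a] allI impI)
  fix j assume j: "j < n"
  let ?b = "antipode (x j)"
  have e: "frac (x j - a) = frac (frac (?b - a) - 1/2)"
    unfolding antipode_def by (simp add: frac_minus_frac algebra_simps)
  show "frac (x j - a) \<le> 1/2"
  proof (cases "?b = a")
    case True
    have "frac (-(1/2) :: real) = 1/2"
      using frac_neg[of "1/2 :: real"] by (simp add: frac_eq)
    then show ?thesis using e True by simp
  next
    case False
    have "1/2 \<le> frac (?b - a)"
      using g gap_le_frac[OF antipodes_finite[of n x] antipode_in_antipodes[OF j] False] by linarith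
    then have "frac (frac (?b - a) - 1/2) = frac (?b - a) - 1/2"
      using frac_lt_1[of "?b - a"] by (intro frac_unit) auto
    then show ?thesis using e frac_lt_1[of "?b - a"] by simp
  qed
qed

lemma not_semicircle_cut_set:
  assumes n: "n \<ge> 1" and ns: "\<not> one_semicircle n x"
  shows "cut_set (antipodes n x)" "\<forall>a\<in>antipodes n x. gap (antipodes n x) a < 1/2"
proof -
  show small: "\<forall>a\<in>antipodes n x. gap (antipodes n x) a < 1/2"
    using semicircle_of_long_gap ns by (meson not_le)
  let ?a = "antipode (x 0)"
  have aA: "?a \<in> antipodes n x" using antipode_in_antipodes[of 0 n x] n by simp
  have "\<exists>b\<in>antipodes n x. b \<noteq> ?a"
  proof (rule ccontr)
    assume "\<not> ?thesis"
    then have e: "(\<lambda>b. frac (b - ?a)) ` (antipodes n x - {?a}) = {}" by blast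
    have "gap (antipodes n x) ?a = 1" unfolding gap_def e by simp
    then show False using small aA by auto
  qed
  then show "cut_set (antipodes n x)"
    using aA antipodes_finite antipodes_unit by unfold_locales auto
qed

lemma expectation_rc:
  assumes "cut_set (antipodes n x)"
  shows "measure_pmf.expectation (rc n x) (h :: real \<Rightarrow> real) =
    (\<Sum>a\<in>antipodes n x. gap (antipodes n x) a * h (frac (a + gap (antipodes n x) a / 2)))"
proof -
  have "rc n x = embed_pmf (cut_set.rc_weight (antipodes n x))"
    unfolding rc_def cut_set.rc_weight_def[OF assms] by simp
  then show ?thesis using cut_set.expectation_rc_weight[OF assms] by simp
qed

lemma cost_rc:
  assumes "cut_set (antipodes n x)"
  shows "cost (rc n x) z =
    (\<Sum>a\<in>antipodes n x. gap (antipodes n x) a * cdist z (frac (a + gap (antipodes n x) a / 2)))"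
  unfolding cost_def by (rule expectation_rc[OF assms])

lemma rc_cost_ge:
  assumes n: "n \<ge> 1" and ns: "\<not> one_semicircle n x" and j: "j < n"
  shows "1/4 - (cdist z (antipode (x j)))^2 \<le> cost (rc n x) z"
  using not_semicircle_cut_set[OF n ns] cut_set.rc_cost_lower antipode_in_antipodes[OF j]
  by (simp add: cost_rc)

lemma rc_cost_agent_le:
  assumes n: "n \<ge> 1" and ns: "\<not> one_semicircle n x" and i: "i < n"
  shows "\<exists>j<n. cost (rc n x) (x i) \<le> 1/4 - (cdist (x i) (antipode (x j)))^2"
proof -
  note cs = not_semicircle_cut_set[OF n ns]
  have "frac (x i + 1/2) \<in> antipodes n x"
    using antipode_in_antipodes[OF i] unfolding antipode_def .
  then obtain b where b: "b \<in> antipodes n x" "cost (rc n x) (x i) \<le> 1/4 - (cdist (x i) b)^2"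
    using cut_set.rc_cost_upper[OF cs] unfolding cost_rc[OF cs(1)] by blast
  obtain j where "j < n" "b = antipode (x j)" using b(1) unfolding antipodes_def by auto
  then show ?thesis using b(2) by auto
qed

(* Strategyproofness when the true profile lies on a semicircle: the truthful cost is
   d(x i, x k)/2 for an agent k; a misreport keeps agent k, and both LRM and RC charge at least
   that much (for RC: 1/4 - (1/2 - d)^2 >= d/2 as 0 <= d <= 1/2). *)
lemma strategyproof_on_semicircle:
  assumes n: "n \<ge> 1" and p: "profile n x" and i: "i < n" and v: "v \<in> {0..<1}"
    and s: "one_semicircle n x"
  shows "cost (M n x) (x i) \<le> cost (M n (x(i := v))) (x i)"
proof -
  let ?y = "x(i := v)"
  obtain k where k: "k < n" "cost (lrm n x) (x i) = cdist (x i) (x k) / 2"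
    using lrm_cost_agent[OF n p s i] by blast
  let ?d = "cdist (x i) (x k)"
  have truthful: "cost (M n x) (x i) = ?d / 2" using k s by (simp add: M_def)
  have untruthful: "cost (M n ?y) (x i) =
      (if one_semicircle n ?y then cost (lrm n ?y) (x i) else cost (rc n ?y) (x i))"
    by (simp add: M_def)
  show ?thesis
  proof (cases "k = i")
    case True
    then show ?thesis using truthful cost_nonneg by (simp add: cdist_self)
  next
    case ki: False
    then have yk: "?y k = x k" by simp
    show ?thesis
    proof (cases "one_semicircle n ?y")
      case True
      then show ?thesis
        using lrm_cost_ge_agent[OF n profile_update[OF p v] True k(1), of "x i"] truthful untruthful yk
        by simp
    next
      case False
      have "0 \<le> ?d * (1/2 - ?d)"
        using cdist_nonneg[of "x i" "x k"] cdist_le_half[of "x i" "x k"] by simp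
      then have "?d / 2 \<le> 1/4 - (1/2 - ?d)^2" by (simp add: power2_eq_square algebra_simps)
      then show ?thesis
        using rc_cost_ge[OF n False k(1), of "x i"] truthful untruthful yk False
        by (simp add: cdist_antipode)
    qed
  qed
qed

(* Strategyproofness when the true profile is not on a semicircle: the truthful cost is at most
   1/4 - d(x i, antipode (x j))^2.  If the misreport puts the agents on a semicircle, the
   antipode of x i lies in the LRM arc, costing at least 1/4; otherwise the RC lower bound with
   the same antipode applies (for j = i the truthful cost is 0). *)
lemma strategyproof_off_semicircle:
  assumes n: "n \<ge> 1" and p: "profile n x" and i: "i < n" and v: "v \<in> {0..<1}"
    and ns: "\<not> one_semicircle n x"
  shows "cost (M n x) (x i) \<le> cost (M n (x(i := v))) (x i)"
proof -
  let ?y = "x(i := v)"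
  have p': "profile n ?y" using profile_update[OF p v] .
  obtain j where j: "j < n" "cost (rc n x) (x i) \<le> 1/4 - (cdist (x i) (antipode (x j)))^2"
    using rc_cost_agent_le[OF n ns i] by blast
  have truthful: "cost (M n x) (x i) \<le> 1/4 - (cdist (x i) (antipode (x j)))^2"
    using j ns by (simp add: M_def)
  show ?thesis
  proof (cases "one_semicircle n ?y")
    case sy: True
    obtain l L where e: "lrm_arc n ?y = (l, L)" by (cases "lrm_arc n ?y") auto
    have "\<forall>k<n. k \<noteq> i \<longrightarrow> in_arc l L (x k)"
      using lrm_arc(2)[OF n p' e] unfolding covers_def by (metis fun_upd_other)
    then have "in_arc l L (antipode (x i))"
      using antipode_in_arc[OF ns i] lrm_arc_le_half[OF n p' sy e] by blast
    then have "1/4 \<le> cost (lrm n ?y) (x i)" by (rule lrm_cost_ge_quarter[OF n p' sy e])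
    moreover have "cost (M n x) (x i) \<le> 1/4"
      using truthful zero_le_power2[of "cdist (x i) (antipode (x j))"] by linarith
    ultimately show ?thesis using sy by (simp add: M_def)
  next
    case nsy: False
    show ?thesis
    proof (cases "j = i")
      case True
      have half: "cdist (x i) (antipode (x j)) = 1/2" using True cdist_antipode[of "x i" "x i"]
        by (simp add: cdist_self)
      have "(cdist (x i) (antipode (x j)))^2 = 1/4" unfolding half by (simp add: power2_eq_square)
      then have "cost (M n x) (x i) \<le> 0" using truthful by linarith
      then show ?thesis using cost_nonneg[of "M n ?y" "x i"] by linarith
    next
      case False
      then show ?thesis using rc_cost_ge[OF n nsy j(1), of "x i"] truthful nsy
        by (simp add: M_def)
    qed
  qed
qed

lemma strategyproof_M:
  assumes "n \<ge> 1"
  shows "strategyproof n (M n)"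
  unfolding strategyproof_def
  using strategyproof_on_semicircle[OF assms] strategyproof_off_semicircle[OF assms] by blast

definition max_cost :: "nat \<Rightarrow> (nat \<Rightarrow> real) \<Rightarrow> real \<Rightarrow> real" where
  "max_cost n x y = Max ((\<lambda>i. cdist y (x i)) ` {..<n})"

lemma max_cost_ge: "i < n \<Longrightarrow> cdist y (x i) \<le> max_cost n x y"
  unfolding max_cost_def by (intro Max_ge) auto

lemma max_cost_le:
  "n \<ge> 1 \<Longrightarrow> (\<And>i. i < n \<Longrightarrow> cdist y (x i) \<le> c) \<Longrightarrow> max_cost n x y \<le> c"
  unfolding max_cost_def by (intro Max.boundedI) (auto simp: lessThan_empty_iff)

lemma mc_eq_max_cost: "mc n P x = measure_pmf.expectation P (max_cost n x)"
  unfolding mc_def max_cost_def ..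

lemma optimum_ge:
  assumes "\<And>y. y \<in> {0..<1} \<Longrightarrow> c \<le> max_cost n x y"
  shows "c \<le> (INF y\<in>{0..<1}. mc n (return_pmf y) x)"
  using assms by (intro cINF_greatest) (auto simp: mc_eq_max_cost)

(* LRM has maximum cost at most L/4 + L/4 + (L/2)/2 = 3L/4: every agent is within L of both ends
   of the arc and within L/2 of its midpoint. *)
lemma mc_lrm_le:
  assumes n: "n \<ge> 1" and p: "profile n x" and s: "one_semicircle n x" and e: "lrm_arc n x = (l, L)"
  shows "mc n (lrm n x) x \<le> 3/4 * L"
proof -
  have L: "0 \<le> L" "L \<le> 1/2" using lrm_arc(1)[OF n p e] lrm_arc_le_half[OF n p s e] by auto
  have w: "0 \<le> frac (x i - l)" "frac (x i - l) \<le> L" if "i < n" for i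
    using lrm_arc_offset[OF n p e that] by auto
  have "max_cost n x l \<le> L"
  proof (rule max_cost_le[OF n])
    fix i assume "i < n"
    then show "cdist l (x i) \<le> L"
      unfolding cdist_sym[of l] unfolding cdist_from_base using w L by (intro arcd_within_arc(1))
  qed
  moreover have "max_cost n x (frac (l + L)) \<le> L"
  proof (rule max_cost_le[OF n])
    fix i assume "i < n"
    then show "cdist (frac (l + L)) (x i) \<le> L"
      unfolding cdist_sym[of "frac (l + L)"] cdist_offset using w L by (intro arcd_within_arc(2))
  qed
  moreover have "max_cost n x (frac (l + L/2)) \<le> L/2"
  proof (rule max_cost_le[OF n])
    fix i assume "i < n"
    then show "cdist (frac (l + L/2)) (x i) \<le> L/2"
      unfolding cdist_sym[of "frac (l + L/2)"] cdist_offset using w L by (intro arcd_within_arc(3))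
  qed
  ultimately show ?thesis unfolding mc_eq_max_cost expectation_lrm[OF e] by linarith
qed

(* Any location is at total distance at least L from the two agents at the ends of the arc,
   so the optimal maximum cost is at least L/2. *)
lemma optimum_ge_half_arc:
  assumes n: "n \<ge> 1" and p: "profile n x" and s: "one_semicircle n x" and e: "lrm_arc n x = (l, L)"
  shows "L/2 \<le> (INF y\<in>{0..<1}. mc n (return_pmf y) x)"
proof (rule optimum_ge)
  fix y :: real
  have L: "0 \<le> L" "L \<le> 1/2" using lrm_arc(1)[OF n p e] lrm_arc_le_half[OF n p s e] by auto
  obtain i0 where i0: "i0 < n" "x i0 = l" using lrm_arc(4)[OF n p e] by blast
  obtain j0 where j0: "j0 < n" "x j0 = frac (l + L)" using lrm_arc(5)[OF n p e] by blast
  have "L \<le> arcd (frac (y - l)) + arcd (frac (y - l) - L)"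
    using L frac_lt_1[of "y - l"] by (intro arcd_arc_ends) auto
  also have "\<dots> = cdist y (x i0) + cdist y (x j0)"
    unfolding i0(2) j0(2) cdist_offset by (simp only: cdist_from_base)
  finally show "L/2 \<le> max_cost n x y"
    using max_cost_ge[of i0 n y x] max_cost_ge[of j0 n y x] i0(1) j0(1) by linarith
qed

lemma approx_lrm:
  assumes n: "n \<ge> 1" and p: "profile n x" and s: "one_semicircle n x"
  shows "mc n (M n x) x \<le> 3/2 * (INF y\<in>{0..<1}. mc n (return_pmf y) x)"
proof -
  obtain l L where e: "lrm_arc n x = (l, L)" by (cases "lrm_arc n x") auto
  show ?thesis using mc_lrm_le[OF n p s e] optimum_ge_half_arc[OF n p s e] s
    by (simp add: M_def)
qed

(* Off a semicircle, with G the largest gap: every midpoint is at distance >= g/2 from every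
   antipode, so RC has maximum cost <= sum g (1/2 - g/2) <= 1/2 - G^2/2; every location is within
   G/2 of an antipode, so the optimum is >= 1/2 - G/2; and 1/2 - G^2/2 <= 3/2 (1/2 - G/2) as G < 1/2. *)
lemma approx_rc:
  assumes n: "n \<ge> 1" and ns: "\<not> one_semicircle n x"
  shows "mc n (M n x) x \<le> 3/2 * (INF y\<in>{0..<1}. mc n (return_pmf y) x)"
proof -
  let ?A = "antipodes n x"
  have cs: "cut_set ?A" and small: "\<forall>a\<in>?A. gap ?A a < 1/2" using not_semicircle_cut_set[OF n ns] by auto
  have neA: "?A \<noteq> {}" using cut_set.two[OF cs] by auto
  define G where "G = Max (gap ?A ` ?A)"
  have "G \<in> gap ?A ` ?A" unfolding G_def using antipodes_finite neA by (intro Max_in) auto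
  then obtain a1 where a1: "a1 \<in> ?A" "G = gap ?A a1" by auto
  have Gge: "gap ?A a \<le> G" if "a \<in> ?A" for a unfolding G_def using antipodes_finite that by simp
  have G: "0 \<le> G" "G < 1/2" using a1 cut_set.gap_pos[OF cs a1(1)] small by auto
  have mid: "max_cost n x (frac (a + gap ?A a / 2)) \<le> 1/2 - gap ?A a / 2" if a: "a \<in> ?A" for a
    using cut_set.midpoint_far[OF cs a antipode_in_antipodes] cdist_antipode
    by (intro max_cost_le[OF n]) (smt (verit))
  have "mc n (M n x) x = (\<Sum>a\<in>?A. gap ?A a * max_cost n x (frac (a + gap ?A a / 2)))"
    using ns unfolding M_def mc_eq_max_cost by (simp add: expectation_rc[OF cs])
  also have "\<dots> \<le> (\<Sum>a\<in>?A. gap ?A a * (1/2 - gap ?A a / 2))"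
    using mid cut_set.gap_pos[OF cs] by (intro sum_mono mult_left_mono) (auto intro: less_imp_le)
  also have "\<dots> = (\<Sum>a\<in>?A. gap ?A a) / 2 - (\<Sum>a\<in>?A. (gap ?A a)^2) / 2"
    by (simp add: sum_divide_distrib sum_subtractf power2_eq_square algebra_simps)
  also have "\<dots> \<le> 1/2 - G^2/2"
    using member_le_sum[of a1 ?A "\<lambda>a. (gap ?A a)^2"] a1 antipodes_finite cut_set.sum_gap[OF cs]
    by simp
  also have "\<dots> \<le> 3/2 * (1/2 - G/2)"
    using mult_nonneg_nonneg[of "1/2 - G" "1 - G"] G by (simp add: power2_eq_square field_simps)
  also have "\<dots> \<le> 3/2 * (INF y\<in>{0..<1}. mc n (return_pmf y) x)"
  proof (intro mult_left_mono optimum_ge)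
    fix y :: real
    obtain a b where ab: "a \<in> ?A" "b \<in> ?A" "cdist y b \<le> gap ?A a / 2"
      using cut_set.near_cut[OF cs, of y] by blast
    obtain j where j: "j < n" "b = antipode (x j)" using ab(2) unfolding antipodes_def by auto
    show "1/2 - G/2 \<le> max_cost n x y"
      using cdist_antipode[of y "x j"] j ab(3) Gge[OF ab(1)] max_cost_ge[of j n y x, OF j(1)] by simp
  qed simp
  finally show ?thesis .
qed

theorem theorem4:
  fixes n :: nat
  assumes "n \<ge> 1"
  shows "strategyproof n (M n) \<and>
    (\<forall>x. profile n x \<longrightarrow>
       mc n (M n x) x \<le> 3/2 * (INF y\<in>{0..<1}. mc n (return_pmf y) x))"
  using strategyproof_M[OF assms] approx_lrm[OF assms] approx_rc[OF assms] by blast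

end
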